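(* Let $A$ be a skew brace. Then $\mathrm{Spec}\,A$ (with the spectral topology) is irreducible if and only if $\mathrm{Nil}\,A$ is a prime ideal.
   Context: A (left) skew brace is a triple $(A,+,\circ)$ where $(A,+)$ and $(A,\circ)$ are groups such that $a\circ(b+c)=a\circ b-a+a\circ c$ for all $a,b,c$; common identity $e$. Put $\lambda_a(b)=-a+a\circ b$ and $a*b=-a+a\circ b-b$. An ideal is a normal subgroup $I$ of both $(A,+)$ and $(A,\circ)$ with $\lambda_a(I)\subseteq I$ for all $a$. A prime ideal is a proper ideal $P$ such that for any subsets $X,Y$ of $A$, $\{x*y\mid x\in X,y\in Y\}\subseteq P$ implies $X\subseteq P$ or $Y\subseteq P$; $\mathrm{Spec}\,A$ is the set of prime ideals, with the spectral topology whose closed sets are $H(I)=\{P\in\mathrm{Spec}\,A\mid I\subseteq P\}$, $I$ an ideal. $\mathrm{Nil}\,A$ is the intersection of all prime ideals of $A$. A space is irreducible if it is not the union of two proper closed subsets. *)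

theory Defs
  imports "HOL-Algebra.Group" "HOL-Algebra.Coset"
begin

text \<open>A skew brace is given by a carrier set A, the additive operation pl,
the multiplicative (circle) operation cm and the common identity e.\<close>

definition add_grp :: "'a set \<Rightarrow> ('a \<Rightarrow> 'a \<Rightarrow> 'a) \<Rightarrow> 'a \<Rightarrow> 'a monoid" where
  "add_grp A pl e = \<lparr>carrier = A, monoid.mult = pl, one = e\<rparr>"

definition circ_grp :: "'a set \<Rightarrow> ('a \<Rightarrow> 'a \<Rightarrow> 'a) \<Rightarrow> 'a \<Rightarrow> 'a monoid" where
  "circ_grp A cm e = \<lparr>carrier = A, monoid.mult = cm, one = e\<rparr>"

definition bneg :: "'a set \<Rightarrow> ('a \<Rightarrow> 'a \<Rightarrow> 'a) \<Rightarrow> 'a \<Rightarrow> 'a \<Rightarrow> 'a" where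
  "bneg A pl e a = inv\<^bsub>add_grp A pl e\<^esub> a"

definition skew_brace :: "'a set \<Rightarrow> ('a \<Rightarrow> 'a \<Rightarrow> 'a) \<Rightarrow> ('a \<Rightarrow> 'a \<Rightarrow> 'a) \<Rightarrow> 'a \<Rightarrow> bool" where
  "skew_brace A pl cm e \<longleftrightarrow>
     group (add_grp A pl e) \<and> group (circ_grp A cm e) \<and>
     (\<forall>a\<in>A. \<forall>b\<in>A. \<forall>c\<in>A. cm a (pl b c) = pl (pl (cm a b) (bneg A pl e a)) (cm a c))"

definition blam :: "'a set \<Rightarrow> ('a \<Rightarrow> 'a \<Rightarrow> 'a) \<Rightarrow> ('a \<Rightarrow> 'a \<Rightarrow> 'a) \<Rightarrow> 'a \<Rightarrow> 'a \<Rightarrow> 'a \<Rightarrow> 'a" where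
  "blam A pl cm e a b = pl (bneg A pl e a) (cm a b)"

definition bstar :: "'a set \<Rightarrow> ('a \<Rightarrow> 'a \<Rightarrow> 'a) \<Rightarrow> ('a \<Rightarrow> 'a \<Rightarrow> 'a) \<Rightarrow> 'a \<Rightarrow> 'a \<Rightarrow> 'a \<Rightarrow> 'a" where
  "bstar A pl cm e a b = pl (pl (bneg A pl e a) (cm a b)) (bneg A pl e b)"

definition brace_ideal :: "'a set \<Rightarrow> ('a \<Rightarrow> 'a \<Rightarrow> 'a) \<Rightarrow> ('a \<Rightarrow> 'a \<Rightarrow> 'a) \<Rightarrow> 'a \<Rightarrow> 'a set \<Rightarrow> bool" where
  "brace_ideal A pl cm e I \<longleftrightarrow>
     normal I (add_grp A pl e) \<and> normal I (circ_grp A cm e) \<and>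
     (\<forall>a\<in>A. blam A pl cm e a ` I \<subseteq> I)"

definition prime_ideal :: "'a set \<Rightarrow> ('a \<Rightarrow> 'a \<Rightarrow> 'a) \<Rightarrow> ('a \<Rightarrow> 'a \<Rightarrow> 'a) \<Rightarrow> 'a \<Rightarrow> 'a set \<Rightarrow> bool" where
  "prime_ideal A pl cm e P \<longleftrightarrow>
     brace_ideal A pl cm e P \<and> P \<noteq> A \<and>
     (\<forall>X Y. X \<subseteq> A \<longrightarrow> Y \<subseteq> A \<longrightarrow>
        {bstar A pl cm e x y | x y. x \<in> X \<and> y \<in> Y} \<subseteq> P \<longrightarrow> X \<subseteq> P \<or> Y \<subseteq> P)"

definition Spec :: "'a set \<Rightarrow> ('a \<Rightarrow> 'a \<Rightarrow> 'a) \<Rightarrow> ('a \<Rightarrow> 'a \<Rightarrow> 'a) \<Rightarrow> 'a \<Rightarrow> 'a set set" where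
  "Spec A pl cm e = {P. prime_ideal A pl cm e P}"

definition hull_H :: "'a set \<Rightarrow> ('a \<Rightarrow> 'a \<Rightarrow> 'a) \<Rightarrow> ('a \<Rightarrow> 'a \<Rightarrow> 'a) \<Rightarrow> 'a \<Rightarrow> 'a set \<Rightarrow> 'a set set" where
  "hull_H A pl cm e I = {P \<in> Spec A pl cm e. I \<subseteq> P}"

definition spec_closed :: "'a set \<Rightarrow> ('a \<Rightarrow> 'a \<Rightarrow> 'a) \<Rightarrow> ('a \<Rightarrow> 'a \<Rightarrow> 'a) \<Rightarrow> 'a \<Rightarrow> 'a set set \<Rightarrow> bool" where
  "spec_closed A pl cm e C \<longleftrightarrow> (\<exists>I. brace_ideal A pl cm e I \<and> C = hull_H A pl cm e I)"

text \<open>Nil A: intersection of all prime ideals (inside A; equals A if there are none).\<close>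
definition Nil_brace :: "'a set \<Rightarrow> ('a \<Rightarrow> 'a \<Rightarrow> 'a) \<Rightarrow> ('a \<Rightarrow> 'a \<Rightarrow> 'a) \<Rightarrow> 'a \<Rightarrow> 'a set" where
  "Nil_brace A pl cm e = {a \<in> A. \<forall>P \<in> Spec A pl cm e. a \<in> P}"

definition spec_irreducible :: "'a set \<Rightarrow> ('a \<Rightarrow> 'a \<Rightarrow> 'a) \<Rightarrow> ('a \<Rightarrow> 'a \<Rightarrow> 'a) \<Rightarrow> 'a \<Rightarrow> bool" where
  "spec_irreducible A pl cm e \<longleftrightarrow>
     Spec A pl cm e \<noteq> {} \<and>
     \<not> (\<exists>C1 C2. spec_closed A pl cm e C1 \<and> spec_closed A pl cm e C2 \<and>
              C1 \<subset> Spec A pl cm e \<and> C2 \<subset> Spec A pl cm e \<and>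
              Spec A pl cm e = C1 \<union> C2)"

end

theory Submission
  imports Defs "HOL-Algebra.Generated_Groups"
begin

text \<open>If \<open>Nil A\<close> is prime, it is the generic point of \<open>Spec A\<close>: a closed set \<open>H(I)\<close> containing it
contains every prime, so \<open>Spec A\<close> cannot be the union of two proper closed subsets.
Conversely, if \<open>Spec A\<close> is irreducible and \<open>X * Y \<subseteq> Nil A\<close>, then every prime contains \<open>X\<close> or \<open>Y\<close>,
so \<open>Spec A\<close> is the union of the closed sets \<open>H(\<langle>X\<rangle>)\<close> and \<open>H(\<langle>Y\<rangle>)\<close> of the ideals generated
by \<open>X\<close> and \<open>Y\<close>; one of them is all of \<open>Spec A\<close>, i.e. \<open>X \<subseteq> Nil A\<close> or \<open>Y \<subseteq> Nil A\<close>.\<close>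

lemma (in group) normal_Inter:
  assumes "\<F> \<noteq> {}" and "\<And>N. N \<in> \<F> \<Longrightarrow> N \<lhd> G"
  shows "\<Inter>\<F> \<lhd> G"
proof (rule normal_invI)
  show "subgroup (\<Inter>\<F>) G"
    using assms subgroups_Inter normal_imp_subgroup by blast
  show "x \<otimes> h \<otimes> inv x \<in> \<Inter>\<F>" if "x \<in> carrier G" and "h \<in> \<Inter>\<F>" for x h
    using that assms(2) normal.inv_op_closed2 by fastforce
qed

lemma brace_ideal_subset:
  assumes "brace_ideal A pl cm e I"
  shows "I \<subseteq> A"
  using assms subgroup.subset[OF normal_imp_subgroup]
  unfolding brace_ideal_def by (fastforce simp: add_grp_def)

lemma brace_ideal_Inter:
  assumes "\<F> \<noteq> {}" and ideals: "\<And>I. I \<in> \<F> \<Longrightarrow> brace_ideal A pl cm e I"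
  shows "brace_ideal A pl cm e (\<Inter>\<F>)"
proof -
  obtain I where "I \<in> \<F>" using assms(1) by blast
  then have "group (add_grp A pl e)" and "group (circ_grp A cm e)"
    using ideals unfolding brace_ideal_def normal_def by blast+
  then have "\<Inter>\<F> \<lhd> add_grp A pl e" and "\<Inter>\<F> \<lhd> circ_grp A cm e"
    using group.normal_Inter[OF _ assms(1)] ideals unfolding brace_ideal_def by blast+
  moreover have "\<forall>a\<in>A. blam A pl cm e a ` \<Inter>\<F> \<subseteq> \<Inter>\<F>"
    using ideals unfolding brace_ideal_def by blast
  ultimately show ?thesis
    unfolding brace_ideal_def by blast
qed

lemma brace_ideal_carrier:
  assumes "skew_brace A pl cm e"
  shows "brace_ideal A pl cm e A"
proof -
  interpret add: group "add_grp A pl e"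
    using assms unfolding skew_brace_def by blast
  interpret circ: group "circ_grp A cm e"
    using assms unfolding skew_brace_def by blast
  have "blam A pl cm e a b \<in> A" if "a \<in> A" and "b \<in> A" for a b
    using that add.m_closed add.inv_closed circ.m_closed
    by (simp add: blam_def bneg_def add_grp_def circ_grp_def)
  then show ?thesis
    using add.normal_self circ.normal_self
    unfolding brace_ideal_def by (auto simp: add_grp_def circ_grp_def)
qed

definition generated_brace_ideal ::
    "'a set \<Rightarrow> ('a \<Rightarrow> 'a \<Rightarrow> 'a) \<Rightarrow> ('a \<Rightarrow> 'a \<Rightarrow> 'a) \<Rightarrow> 'a \<Rightarrow> 'a set \<Rightarrow> 'a set" where
  "generated_brace_ideal A pl cm e X = \<Inter>{I. brace_ideal A pl cm e I \<and> X \<subseteq> I}"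

lemma brace_ideal_generated_brace_ideal:
  assumes "skew_brace A pl cm e" and "X \<subseteq> A"
  shows "brace_ideal A pl cm e (generated_brace_ideal A pl cm e X)"
  unfolding generated_brace_ideal_def
proof (rule brace_ideal_Inter)
  show "{I. brace_ideal A pl cm e I \<and> X \<subseteq> I} \<noteq> {}"
    using brace_ideal_carrier[OF assms(1)] assms(2) by blast
qed simp

lemma generated_brace_ideal_subset_iff:
  assumes "brace_ideal A pl cm e P"
  shows "generated_brace_ideal A pl cm e X \<subseteq> P \<longleftrightarrow> X \<subseteq> P"
proof
  show "X \<subseteq> P" if "generated_brace_ideal A pl cm e X \<subseteq> P"
    using that unfolding generated_brace_ideal_def by blast
  show "generated_brace_ideal A pl cm e X \<subseteq> P" if "X \<subseteq> P"
    using assms that unfolding generated_brace_ideal_def by (blast intro: Inter_lower)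
qed

lemma prime_ideal_brace_ideal: "prime_ideal A pl cm e P \<Longrightarrow> brace_ideal A pl cm e P"
  unfolding prime_ideal_def by blast

lemma prime_ideal_subset: "prime_ideal A pl cm e P \<Longrightarrow> P \<subseteq> A"
  by (rule brace_ideal_subset[OF prime_ideal_brace_ideal])

lemma prime_idealD:
  assumes "prime_ideal A pl cm e P" and "X \<subseteq> A" and "Y \<subseteq> A"
    and "{bstar A pl cm e x y | x y. x \<in> X \<and> y \<in> Y} \<subseteq> P"
  shows "X \<subseteq> P \<or> Y \<subseteq> P"
  using assms unfolding prime_ideal_def by blast

lemma spec_closed_primes_containing:
  assumes "skew_brace A pl cm e" and "X \<subseteq> A"
  shows "spec_closed A pl cm e {P \<in> Spec A pl cm e. X \<subseteq> P}"
  unfolding spec_closed_def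
proof (intro exI conjI)
  show "brace_ideal A pl cm e (generated_brace_ideal A pl cm e X)"
    using assms by (rule brace_ideal_generated_brace_ideal)
  show "{P \<in> Spec A pl cm e. X \<subseteq> P} = hull_H A pl cm e (generated_brace_ideal A pl cm e X)"
  proof -
    have "generated_brace_ideal A pl cm e X \<subseteq> P \<longleftrightarrow> X \<subseteq> P" if "P \<in> Spec A pl cm e" for P
      using that by (simp add: Spec_def generated_brace_ideal_subset_iff prime_ideal_brace_ideal)
    then show ?thesis
      unfolding hull_H_def by blast
  qed
qed

lemma spec_irreducible_iff:
  "spec_irreducible A pl cm e \<longleftrightarrow>
     Spec A pl cm e \<noteq> {} \<and>
     (\<forall>C1 C2. spec_closed A pl cm e C1 \<longrightarrow> spec_closed A pl cm e C2 \<longrightarrow>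
        Spec A pl cm e = C1 \<union> C2 \<longrightarrow> C1 = Spec A pl cm e \<or> C2 = Spec A pl cm e)"
proof -
  have "C \<subseteq> Spec A pl cm e" if "spec_closed A pl cm e C" for C
    using that unfolding spec_closed_def hull_H_def by blast
  then show ?thesis
    unfolding spec_irreducible_def by blast
qed

lemma subset_Nil_brace_iff:
  "X \<subseteq> A \<Longrightarrow> X \<subseteq> Nil_brace A pl cm e \<longleftrightarrow> (\<forall>P \<in> Spec A pl cm e. X \<subseteq> P)"
  unfolding Nil_brace_def by blast

lemma Nil_brace_eq_Inter_Spec:
  assumes "P \<in> Spec A pl cm e"
  shows "Nil_brace A pl cm e = \<Inter>(Spec A pl cm e)"
proof -
  have "P \<subseteq> A"
    using assms prime_ideal_subset by (simp add: Spec_def)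
  then show ?thesis
    using assms unfolding Nil_brace_def by blast
qed

lemma prime_ideal_Nil_brace_if_spec_irreducible:
  assumes brace: "skew_brace A pl cm e" and irr: "spec_irreducible A pl cm e"
  shows "prime_ideal A pl cm e (Nil_brace A pl cm e)"
proof -
  let ?S = "Spec A pl cm e" and ?N = "Nil_brace A pl cm e"
  have "?S \<noteq> {}"
    and cover: "\<And>C1 C2. \<lbrakk>spec_closed A pl cm e C1; spec_closed A pl cm e C2; ?S = C1 \<union> C2\<rbrakk>
        \<Longrightarrow> C1 = ?S \<or> C2 = ?S"
    using irr unfolding spec_irreducible_iff by blast+
  then obtain P where P: "P \<in> ?S"
    by blast
  have N: "?N = \<Inter>?S"
    using P by (rule Nil_brace_eq_Inter_Spec)
  have "brace_ideal A pl cm e ?N"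
    unfolding N using P by (intro brace_ideal_Inter) (auto simp: Spec_def prime_ideal_brace_ideal)
  moreover have "?N \<noteq> A"
  proof -
    have "?N \<subseteq> P"
      using P unfolding N by blast
    moreover have "P \<subseteq> A" and "P \<noteq> A"
      using P prime_ideal_subset by (simp_all add: Spec_def prime_ideal_def)
    ultimately show ?thesis
      by blast
  qed
  moreover have "X \<subseteq> ?N \<or> Y \<subseteq> ?N"
    if X: "X \<subseteq> A" and Y: "Y \<subseteq> A" and XY: "{bstar A pl cm e x y | x y. x \<in> X \<and> y \<in> Y} \<subseteq> ?N"
    for X Y
  proof -
    have "X \<subseteq> Q \<or> Y \<subseteq> Q" if "Q \<in> ?S" for Q
    proof -
      have Q: "prime_ideal A pl cm e Q"
        using that by (simp add: Spec_def)
      have "?N \<subseteq> Q"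
        using that unfolding N by blast
      then show ?thesis
        using prime_idealD[OF Q X Y order_trans[OF XY]] by blast
    qed
    then have "?S = {Q \<in> ?S. X \<subseteq> Q} \<union> {Q \<in> ?S. Y \<subseteq> Q}"
      by blast
    then have "{Q \<in> ?S. X \<subseteq> Q} = ?S \<or> {Q \<in> ?S. Y \<subseteq> Q} = ?S"
      by (rule cover[OF spec_closed_primes_containing[OF brace X]
            spec_closed_primes_containing[OF brace Y]])
    then have "(\<forall>Q \<in> ?S. X \<subseteq> Q) \<or> (\<forall>Q \<in> ?S. Y \<subseteq> Q)"
      by blast
    then show ?thesis
      unfolding subset_Nil_brace_iff[OF X] subset_Nil_brace_iff[OF Y] .
  qed
  ultimately show ?thesis
    unfolding prime_ideal_def by blast
qed

lemma spec_irreducible_if_prime_ideal_Nil_brace: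
  assumes "prime_ideal A pl cm e (Nil_brace A pl cm e)"
  shows "spec_irreducible A pl cm e"
proof -
  let ?S = "Spec A pl cm e" and ?N = "Nil_brace A pl cm e"
  have N: "?N \<in> ?S"
    using assms by (simp add: Spec_def)
  have "hull_H A pl cm e I = ?S" if "?N \<in> hull_H A pl cm e I" for I
    using that unfolding hull_H_def Nil_brace_def by blast
  then have "C = ?S" if "spec_closed A pl cm e C" and "?N \<in> C" for C
    using that unfolding spec_closed_def by blast
  then show ?thesis
    using N unfolding spec_irreducible_iff by blast
qed

theorem proposition4p13:
  fixes A :: "'a set" and pl cm :: "'a \<Rightarrow> 'a \<Rightarrow> 'a" and e :: 'a
  assumes "skew_brace A pl cm e"
  shows "spec_irreducible A pl cm e \<longleftrightarrow> prime_ideal A pl cm e (Nil_brace A pl cm e)"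
  by (rule iffI[OF prime_ideal_Nil_brace_if_spec_irreducible[OF assms]
        spec_irreducible_if_prime_ideal_Nil_brace])

end
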